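(* Let $\mathcal{G}=\{G_1,\dots,G_M\}$ be groups with $G_i\subseteq[p]$ and $\bigcup_i G_i=[p]$. Let $\vec g\in\mathbb{R}^p$, let $\tilde k$ and $k$ be positive integers, let $\hat{\vec u}$ be the output of the Greedy Projection algorithm applied to $\vec g$ with target group sparsity $\tilde k$, and let $\vec u_*=P_k^{\mathcal{G}}(\vec g)$. Then \[ \|\hat{\vec u}-\vec g\|_2^2\le e^{-\tilde k/k}\,\|\vec g_{\operatorname{supp}(\vec u_* )}\|_2^2+\|\vec u_*-\vec g\|_2^2 , \] where $e$ is the base of the natural logarithm.
   Context: For $\vec w\in\mathbb{R}^p$ and $S\subseteq[p]$, $\vec w_S$ is the vector that agrees with $\vec w$ on $S$ and is $0$ outside $S$. The group-$\ell_0$ pseudo-norm $\|\vec w\|_0^{\mathcal{G}}$ is the minimum, over all decompositions $\vec w=\sum_{i=1}^M \vec a_{G_i}$ with $\operatorname{supp}(\vec a_{G_i})\subseteq G_i$, of the number of indices $i$ with $\vec a_{G_i}\neq 0$. The exact projection is $P_k^{\mathcal{G}}(\vec g)=\arg\min_{\vec w}\|\vec w-\vec g\|_2^2$ subject to $\|\vec w\|_0^{\mathcal{G}}\le k$. The Greedy Projection algorithm with input $\vec g$ and parameter $\tilde k$: set $\vec u=0$, $\vec v=\vec g$, $\widehat{\mathcal{G}}=\emptyset$; for $t=1,\dots,\tilde k$: choose $G^\star=\arg\max_{G\in\mathcal{G}\setminus\widehat{\mathcal{G}}}\|\vec v_G\|_2$, set $\widehat{\mathcal{G}}=\widehat{\mathcal{G}}\cup\{G^\star\}$,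 $\vec u=\vec u+\vec v_{G^\star}$, $\vec v=\vec v-\vec v_{G^\star}$; output $\hat{\vec u}=\vec u$ (so $\hat{\vec u}$ equals $\vec g$ on the union of the selected groups and $0$ elsewhere). *)

theory Defs
  imports "HOL-Analysis.Analysis"
begin

text \<open>Coordinates are indexed by a finite type 'n (playing the role of [p]);
  vectors are elements of real^'n, whose norm is the Euclidean 2-norm.\<close>

definition restr :: "'n set \<Rightarrow> real^'n \<Rightarrow> real^'n" where
  "restr S w = (\<chi> i. if i \<in> S then w $ i else 0)"

definition vsupp :: "real^'n \<Rightarrow> 'n set" where
  "vsupp w = {i. w $ i \<noteq> 0}"

definition group_l0 :: "'n set set \<Rightarrow> real^'n \<Rightarrow> nat" where
  "group_l0 \<G> w = (LEAST n. \<exists>a :: 'n set \<Rightarrow> real^'n.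
      (\<forall>G\<in>\<G>. vsupp (a G) \<subseteq> G) \<and> w = (\<Sum>G\<in>\<G>. a G)
      \<and> card {G\<in>\<G>. a G \<noteq> 0} = n)"

definition is_group_proj :: "'n set set \<Rightarrow> nat \<Rightarrow> real^'n \<Rightarrow> real^'n \<Rightarrow> bool" where
  "is_group_proj \<G> k g u \<longleftrightarrow> group_l0 \<G> u \<le> k \<and>
     (\<forall>w. group_l0 \<G> w \<le> k \<longrightarrow> (norm (u - g))\<^sup>2 \<le> (norm (w - g))\<^sup>2)"

definition greedy_resid :: "real^'n \<Rightarrow> 'n set list \<Rightarrow> real^'n" where
  "greedy_resid g Ss = restr (- \<Union>(set Ss)) g"

text \<open>Ss is a valid run (sequence of selected groups, in order) of Greedy Projection
  with kt iterations, for any tie-breaking rule in the arg max.\<close>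
definition greedy_run :: "'n set set \<Rightarrow> real^'n \<Rightarrow> nat \<Rightarrow> 'n set list \<Rightarrow> bool" where
  "greedy_run \<G> g kt Ss \<longleftrightarrow> length Ss = kt \<and>
     (\<forall>t < kt. Ss ! t \<in> \<G> - set (take t Ss) \<and>
        (\<forall>H \<in> \<G> - set (take t Ss).
           norm (restr H (greedy_resid g (take t Ss)))
             \<le> norm (restr (Ss ! t) (greedy_resid g (take t Ss)))))"

definition greedy_output :: "real^'n \<Rightarrow> 'n set list \<Rightarrow> real^'n" where
  "greedy_output g Ss = restr (\<Union>(set Ss)) g"

end

theory Submission imports Defs begin

text \<open>Let \<open>A\<close> be a set of at most \<open>k\<close> groups covering the support of \<open>u\<^sub>*\<close>, and \<open>T = \<Union>A\<close>.
  The restriction of \<open>g\<close> to \<open>T\<close> is itself \<open>k\<close>-group-sparse, so optimality forces \<open>u\<^sub>*\<close> to equal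
  it; the right-hand side then reads \<open>exp (- kt / k)\<close> times the energy of \<open>g\<close> on \<open>T\<close> plus its energy
  off \<open>T\<close>. Whenever the residual energy of the greedy run exceeds the energy off \<open>T\<close>, the excess
  lies on the at most \<open>k\<close> groups of \<open>A\<close>, each carrying no more residual energy than the group
  greedy selects; so each step removes at least a \<open>1/k\<close> fraction of the excess, which therefore
  decays like \<open>(1 - 1/k) ^ t \<le> exp (- t / k)\<close>.\<close>

definition energy :: "real^'n \<Rightarrow> 'n set \<Rightarrow> real" where
  "energy g S = (\<Sum>i\<in>S. (g $ i)\<^sup>2)"

lemma energy_nonneg: "0 \<le> energy g S"
  by (simp add: energy_def sum_nonneg)

lemma energy_mono: "S \<subseteq> T \<Longrightarrow> energy (g::real^'n::finite) S \<le> energy g T"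
  unfolding energy_def by (rule sum_mono2) auto

lemma energy_Int_Diff: "energy (g::real^'n::finite) S = energy g (S \<inter> T) + energy g (S - T)"
  unfolding energy_def by (rule sum.Int_Diff) simp

lemma energy_Compl_Un: "energy (g::real^'n::finite) (- (U \<union> S)) = energy g (- U) - energy g (S - U)"
  using energy_Int_Diff[of g "- U" S] by (simp add: Diff_eq Int_commute inf_left_commute)

lemma energy_eq_0_iff: "energy (g::real^'n::finite) S = 0 \<longleftrightarrow> (\<forall>i\<in>S. g $ i = 0)"
  unfolding energy_def by (simp add: sum_nonneg_eq_0_iff)

lemma norm_sq_eq_energy: "(norm (x::real^'n::finite))\<^sup>2 = energy x UNIV"
  by (simp add: norm_vec_def L2_set_def sum_nonneg energy_def)

lemma norm_restr_sq: "(norm (restr S (g::real^'n::finite)))\<^sup>2 = energy g S"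
proof -
  have "energy (restr S g) UNIV = (\<Sum>i\<in>UNIV. if i \<in> S then (g $ i)\<^sup>2 else 0)"
    unfolding energy_def restr_def by (intro sum.cong) auto
  then show ?thesis by (simp add: norm_sq_eq_energy sum.If_cases energy_def)
qed

lemma norm_restr_minus_sq: "(norm (restr S g - (g::real^'n::finite)))\<^sup>2 = energy g (- S)"
proof -
  have "restr S g - g = - restr (- S) g" by (simp add: restr_def vec_eq_iff)
  then show ?thesis by (simp add: norm_restr_sq)
qed

lemma sum_UN_le:
  fixes f :: "'a \<Rightarrow> 'b::ordered_comm_monoid_add"
  assumes "finite I" "\<And>G. G \<in> I \<Longrightarrow> finite (B G)" "\<And>x. 0 \<le> f x"
  shows "sum f (\<Union>G\<in>I. B G) \<le> (\<Sum>G\<in>I. sum f (B G))"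
  using assms(1,2)
proof (induction I rule: finite_induct)
  case (insert G I)
  let ?X = "\<Union>H\<in>I. B H"
  have "sum f (B G \<union> ?X) \<le> sum f (B G \<union> ?X) + sum f (B G \<inter> ?X)"
    by (intro add_increasing2 sum_nonneg assms(3)) simp
  also have "\<dots> = sum f (B G) + sum f ?X"
    using insert by (intro sum.union_inter) auto
  also have "\<dots> \<le> sum f (B G) + (\<Sum>H\<in>I. sum f (B H))"
    using insert by (simp add: add_left_mono)
  finally show ?case using insert.hyps by simp
qed simp

lemma one_minus_inverse_power_le_exp: "(1 - 1 / real k) ^ t \<le> exp (- real t / real k)"
proof -
  have "1 / real k \<le> 1"
    by (cases k) (auto simp: field_simps)
  then have "(1 - 1 / real k) ^ t \<le> exp (- 1 / real k) ^ t"
    using exp_ge_add_one_self[of "- 1 / real k"] by (intro power_mono) auto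
  also have "\<dots> = exp (- real t / real k)"
    by (simp add: exp_of_nat_mult[symmetric])
  finally show ?thesis .
qed

lemma geometric_decay:
  fixes d :: "nat \<Rightarrow> real"
  assumes "0 \<le> q" "0 \<le> d 0"
    and dec: "\<And>t. t < n \<Longrightarrow> d (Suc t) \<le> d t"
    and contr: "\<And>t. t < n \<Longrightarrow> 0 \<le> d t \<Longrightarrow> d (Suc t) \<le> q * d t"
  shows "t \<le> n \<Longrightarrow> d t \<le> q ^ t * d 0"
proof (induction t)
  case (Suc t)
  show ?case
  proof (cases "0 \<le> d t")
    case True
    then have "d (Suc t) \<le> q * d t" using contr Suc.prems by simp
    also have "\<dots> \<le> q * (q ^ t * d 0)" using Suc \<open>0 \<le> q\<close> by (simp add: mult_left_mono)
    finally show ?thesis by simp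
  next
    case False
    have "0 \<le> q ^ Suc t * d 0" using assms(1,2) by simp
    then show ?thesis using dec[of t] Suc.prems False by linarith
  qed
qed simp

lemma norm_restr_greedy_resid_sq:
  "(norm (restr H (greedy_resid g Ts)))\<^sup>2 = energy (g::real^'n::finite) (H - \<Union>(set Ts))"
proof -
  have "restr H (greedy_resid g Ts) = restr (H - \<Union>(set Ts)) g"
    by (simp add: greedy_resid_def restr_def vec_eq_iff)
  then show ?thesis by (simp add: norm_restr_sq)
qed

lemma greedy_run_selects_max_energy:
  fixes g :: "real^'n::finite"
  assumes run: "greedy_run \<G> g kt Ss" and "t < kt" "G \<in> \<G>"
  shows "energy g (G - \<Union>(set (take t Ss))) \<le> energy g (Ss ! t - \<Union>(set (take t Ss)))"
proof (cases "G \<in> set (take t Ss)")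
  case True
  then have "G - \<Union>(set (take t Ss)) = {}" by auto
  then show ?thesis by (metis sum.empty energy_def energy_nonneg)
next
  case False
  then have "norm (restr G (greedy_resid g (take t Ss)))
      \<le> norm (restr (Ss ! t) (greedy_resid g (take t Ss)))"
    using run \<open>t < kt\<close> \<open>G \<in> \<G>\<close> by (auto simp: greedy_run_def)
  then show ?thesis
    by (metis norm_restr_greedy_resid_sq norm_ge_zero power_mono)
qed

lemma greedy_gain_ge:
  fixes g :: "real^'n::finite"
  assumes run: "greedy_run \<G> g kt Ss" and "t < kt"
    and "A \<subseteq> \<G>" "finite A" "card A \<le> k"
  defines "U \<equiv> \<Union>(set (take t Ss))"
  shows "energy g (- U) - energy g (- \<Union>A) \<le> real k * energy g (Ss ! t - U)"
proof -
  have "energy g (- U) = energy g (- U \<inter> \<Union>A) + energy g (- U - \<Union>A)"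
    by (rule energy_Int_Diff)
  moreover have "energy g (- U - \<Union>A) \<le> energy g (- \<Union>A)"
    by (rule energy_mono) auto
  moreover have "- U \<inter> \<Union>A = (\<Union>G\<in>A. G - U)" by auto
  ultimately have "energy g (- U) - energy g (- \<Union>A) \<le> energy g (\<Union>G\<in>A. G - U)"
    by simp
  also have "\<dots> \<le> (\<Sum>G\<in>A. energy g (G - U))"
    unfolding energy_def by (rule sum_UN_le) (auto simp: \<open>finite A\<close>)
  also have "\<dots> \<le> (\<Sum>G\<in>A. energy g (Ss ! t - U))"
    using greedy_run_selects_max_energy[OF run \<open>t < kt\<close>] \<open>A \<subseteq> \<G>\<close>
    by (intro sum_mono) (auto simp: U_def)
  also have "\<dots> \<le> real k * energy g (Ss ! t - U)"
    using \<open>card A \<le> k\<close> by (simp add: energy_nonneg mult_right_mono)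
  finally show ?thesis .
qed

lemma greedy_residual_bound:
  fixes g :: "real^'n::finite"
  assumes run: "greedy_run \<G> g kt Ss" and "A \<subseteq> \<G>" "finite A" "card A \<le> k"
  shows "energy g (- \<Union>(set Ss)) - energy g (- \<Union>A) \<le> (1 - 1 / real k) ^ kt * energy g (\<Union>A)"
proof -
  define U where "U t = \<Union>(set (take t Ss))" for t
  define d where "d t = energy g (- U t) - energy g (- \<Union>A)" for t
  have len: "length Ss = kt" using run by (simp add: greedy_run_def)
  have step: "d (Suc t) = d t - energy g (Ss ! t - U t)" if "t < kt" for t
  proof -
    have "U (Suc t) = U t \<union> Ss ! t"
      using that len by (auto simp: U_def take_Suc_conv_app_nth)
    then show ?thesis by (simp only: d_def energy_Compl_Un)
  qed
  have gain: "d t \<le> real k * energy g (Ss ! t - U t)" if "t < kt" for t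
    using greedy_gain_ge[OF run that assms(2-4)] by (simp add: d_def U_def)
  have "d 0 = energy g (\<Union>A)"
    using energy_Int_Diff[of g UNIV "\<Union>A"] by (simp add: d_def U_def Compl_eq_Diff_UNIV)
  moreover have "d kt \<le> (1 - 1 / real k) ^ kt * d 0"
  proof (rule geometric_decay)
    show "0 \<le> 1 - 1 / real k" by (cases k) auto
    show "0 \<le> d 0" by (simp add: \<open>d 0 = energy g (\<Union>A)\<close> energy_nonneg)
    show "d (Suc t) \<le> d t" if "t < kt" for t
      using step[OF that] by (simp add: energy_nonneg)
    show "d (Suc t) \<le> (1 - 1 / real k) * d t" if "t < kt" "0 \<le> d t" for t
    proof -
      have "d t / real k \<le> energy g (Ss ! t - U t)"
        using gain[OF that(1)] by (cases k) (auto simp: divide_le_eq mult.commute energy_nonneg)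
      then show ?thesis using step[OF that(1)] by (simp add: algebra_simps diff_divide_distrib)
    qed
  qed simp
  ultimately show ?thesis using len by (simp add: d_def U_def)
qed

lemma group_decomposition_exists:
  fixes w :: "real^'n::finite"
  assumes "vsupp w \<subseteq> \<Union>A" "A \<subseteq> \<G>"
  obtains a :: "'n set \<Rightarrow> real^'n"
  where "\<forall>G\<in>\<G>. vsupp (a G) \<subseteq> G" "w = (\<Sum>G\<in>\<G>. a G)" "{G\<in>\<G>. a G \<noteq> 0} \<subseteq> A"
proof -
  define f where "f i = (SOME G. G \<in> A \<and> i \<in> G)" for i
  have f: "f i \<in> A \<and> i \<in> f i" if "i \<in> \<Union>A" for i
    unfolding f_def by (rule someI_ex) (use that in auto)
  define a where "a G = (\<chi> i. if i \<in> \<Union>A \<and> f i = G then w $ i else 0)" for G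
  have "(\<Sum>G\<in>\<G>. a G) $ i = w $ i" for i
  proof (cases "i \<in> \<Union>A")
    case True
    then have "f i \<in> \<G>" using f assms(2) by blast
    then show ?thesis using True by (simp add: sum_component a_def sum.delta')
  next
    case False
    then have "w $ i = 0" using assms(1) by (auto simp: vsupp_def)
    then show ?thesis using False by (simp add: sum_component a_def)
  qed
  moreover have "G \<in> A" if "a G \<noteq> 0" for G
    using that f by (auto simp: a_def vec_eq_iff split: if_splits)
  moreover have "vsupp (a G) \<subseteq> G" for G
    using f by (auto simp: a_def vsupp_def split: if_splits)
  ultimately show ?thesis by (intro that[of a]) (auto simp: vec_eq_iff)
qed

lemma group_l0_le_card:
  fixes w :: "real^'n::finite"
  assumes "finite \<G>" "A \<subseteq> \<G>" "vsupp w \<subseteq> \<Union>A"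
  shows "group_l0 \<G> w \<le> card A"
proof -
  obtain a :: "'n set \<Rightarrow> real^'n"
    where a: "\<forall>G\<in>\<G>. vsupp (a G) \<subseteq> G" "w = (\<Sum>G\<in>\<G>. a G)" and sub: "{G\<in>\<G>. a G \<noteq> 0} \<subseteq> A"
    using group_decomposition_exists[OF assms(3,2)] .
  have "group_l0 \<G> w \<le> card {G\<in>\<G>. a G \<noteq> 0}"
    unfolding group_l0_def using a by (intro Least_le) blast
  also have "\<dots> \<le> card A"
    using sub assms(1,2) by (intro card_mono) (auto intro: finite_subset)
  finally show ?thesis .
qed

lemma group_l0_attained_by_cover:
  fixes w :: "real^'n::finite"
  assumes "\<Union>\<G> = UNIV"
  obtains A where "A \<subseteq> \<G>" "card A = group_l0 \<G> w" "vsupp w \<subseteq> \<Union>A"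
proof -
  let ?P = "\<lambda>n. \<exists>a :: 'n set \<Rightarrow> real^'n.
      (\<forall>G\<in>\<G>. vsupp (a G) \<subseteq> G) \<and> w = (\<Sum>G\<in>\<G>. a G) \<and> card {G\<in>\<G>. a G \<noteq> 0} = n"
  obtain a0 :: "'n set \<Rightarrow> real^'n" where "\<forall>G\<in>\<G>. vsupp (a0 G) \<subseteq> G" "w = (\<Sum>G\<in>\<G>. a0 G)"
    using group_decomposition_exists[of w \<G> \<G>] assms by auto
  then have "?P (card {G\<in>\<G>. a0 G \<noteq> 0})" by blast
  then have "?P (group_l0 \<G> w)"
    unfolding group_l0_def by (rule LeastI)
  then obtain a :: "'n set \<Rightarrow> real^'n" where a: "\<forall>G\<in>\<G>. vsupp (a G) \<subseteq> G" "w = (\<Sum>G\<in>\<G>. a G)"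
    and card: "card {G\<in>\<G>. a G \<noteq> 0} = group_l0 \<G> w" by blast
  have "vsupp w \<subseteq> \<Union>{G\<in>\<G>. a G \<noteq> 0}"
  proof
    fix i assume "i \<in> vsupp w"
    then have "(\<Sum>G\<in>\<G>. a G $ i) \<noteq> 0" using a(2) by (simp add: vsupp_def sum_component)
    then obtain G where "G \<in> \<G>" "a G $ i \<noteq> 0" by (meson sum.neutral)
    moreover from this have "a G \<noteq> 0" "i \<in> G" using a(1) by (auto simp: vsupp_def)
    ultimately show "i \<in> \<Union>{G\<in>\<G>. a G \<noteq> 0}" by blast
  qed
  then show ?thesis using card by (intro that) auto
qed

lemma group_proj_eq_restr_cover:
  fixes g u :: "real^'n::finite"
  assumes "finite \<G>" "is_group_proj \<G> k g u"
    and "A \<subseteq> \<G>" "card A \<le> k" "vsupp u \<subseteq> \<Union>A"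
  shows "u = restr (\<Union>A) g"
proof -
  let ?T = "\<Union>A"
  have u_outside: "u $ i = 0" if "i \<notin> ?T" for i
    using assms(5) that by (auto simp: vsupp_def)
  have "vsupp (restr ?T g) \<subseteq> ?T" by (auto simp: vsupp_def restr_def)
  then have "group_l0 \<G> (restr ?T g) \<le> k"
    using group_l0_le_card[OF assms(1,3)] assms(4) by (meson order_trans)
  then have "(norm (u - g))\<^sup>2 \<le> (norm (restr ?T g - g))\<^sup>2"
    using assms(2) unfolding is_group_proj_def by blast
  then have "energy (u - g) UNIV \<le> energy g (- ?T)"
    by (metis norm_restr_minus_sq norm_sq_eq_energy)
  moreover have "energy (u - g) (- ?T) = energy g (- ?T)"
    unfolding energy_def by (intro sum.cong) (auto simp: u_outside)
  moreover have "energy (u - g) UNIV = energy (u - g) ?T + energy (u - g) (- ?T)"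
    using energy_Int_Diff[of "u - g" UNIV ?T] by (simp add: Compl_eq_Diff_UNIV)
  ultimately have "energy (u - g) ?T = 0"
    using energy_nonneg[of "u - g" ?T] by simp
  then show ?thesis
    by (auto simp: energy_eq_0_iff vec_eq_iff restr_def u_outside)
qed

theorem lemma1:
  fixes \<G> :: "'n::finite set set" and g u_star :: "real^'n"
    and kt k :: nat and Ss :: "'n set list"
  assumes "finite \<G>"
    and "\<Union>\<G> = UNIV"
    and "kt > 0" and "k > 0"
    and "greedy_run \<G> g kt Ss"
    and "is_group_proj \<G> k g u_star"
  shows "(norm (greedy_output g Ss - g))\<^sup>2
           \<le> exp (- real kt / real k) * (norm (restr (vsupp u_star) g))\<^sup>2
             + (norm (u_star - g))\<^sup>2"
proof -
  obtain A where A: "A \<subseteq> \<G>" "card A = group_l0 \<G> u_star" "vsupp u_star \<subseteq> \<Union>A"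
    using group_l0_attained_by_cover[OF assms(2)] .
  have "finite A" using A(1) assms(1) by (rule finite_subset)
  have "card A \<le> k" using A(2) assms(6) by (simp add: is_group_proj_def)
  have u: "u_star = restr (\<Union>A) g"
    using group_proj_eq_restr_cover[OF assms(1,6) A(1) \<open>card A \<le> k\<close> A(3)] .
  have "energy g (vsupp u_star) = energy g (\<Union>A)"
    unfolding u energy_def by (rule sum.mono_neutral_left) (auto simp: vsupp_def restr_def)
  then have supp: "(norm (restr (vsupp u_star) g))\<^sup>2 = energy g (\<Union>A)"
    by (simp add: norm_restr_sq)
  have "(norm (greedy_output g Ss - g))\<^sup>2 = energy g (- \<Union>(set Ss))"
    by (simp add: greedy_output_def norm_restr_minus_sq)
  also have "\<dots> \<le> (1 - 1 / real k) ^ kt * energy g (\<Union>A) + energy g (- \<Union>A)"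
    using greedy_residual_bound[OF assms(5) A(1) \<open>finite A\<close> \<open>card A \<le> k\<close>] by simp
  also have "\<dots> \<le> exp (- real kt / real k) * energy g (\<Union>A) + energy g (- \<Union>A)"
    by (intro add_right_mono mult_right_mono one_minus_inverse_power_le_exp energy_nonneg)
  finally show ?thesis unfolding supp by (simp add: u norm_restr_minus_sq)
qed

end
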